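(* Let $r\ge1$, $n$ be integers and let $\sigma,\sigma':\mathbb{Z}_n\to\{0,1\}$ be a temporally periodic pair. Then for every block $[i,j]\in B(\sigma')$, each of the cell intervals $[i-r-1,j-r]$ and $[i+r,j+r+1]$ contains exactly one switch point of $\sigma$.
   Context: Cells are elements of $\mathbb{Z}_n$, arithmetic mod $n$; $[a,b]$ denotes the cyclic interval $a,\dots,b$. The majority rule with radius $r$: $\mathrm{maj}_r(\sigma)(i)=0$ if among the cells of $[i-r,i+r]$ strictly more have value $0$ than $1$ under $\sigma$, and $=1$ otherwise. A pair $\sigma,\sigma'$ is a temporally periodic pair if $\mathrm{maj}_r(\sigma)=\sigma'$ and $\mathrm{maj}_r(\sigma')=\sigma$. For $\beta\in\{0,1\}$, $B^\beta(\sigma)$ is the set of cell intervals $[i,j]$ with $\sigma(k)=\beta$ for all $k\in[i,j]$ and $\sigma(i-1)=\sigma(j+1)=1-\beta$; $B(\sigma)=B^0(\sigma)\cup B^1(\sigma)$. A switch point of $\sigma$ is a pair of consecutive cells $\ell,\ell+1$ with $\sigma(\ell)\ne\sigma(\ell+1)$; an interval contains the switch point if it contains both $\ell$ and $\ell+1$. *)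

theory Defs
  imports Main
begin

text \<open>Configurations on Z_n are represented as n-periodic functions int \<Rightarrow> bool
  (False = 0, True = 1); cell k of Z_n corresponds to all integers congruent to k mod n.\<close>

definition periodic_cfg :: "nat \<Rightarrow> (int \<Rightarrow> bool) \<Rightarrow> bool" where
  "periodic_cfg n \<sigma> \<longleftrightarrow> (\<forall>i. \<sigma> (i + int n) = \<sigma> i)"

definition maj :: "nat \<Rightarrow> (int \<Rightarrow> bool) \<Rightarrow> int \<Rightarrow> bool" where
  "maj r \<sigma> i \<longleftrightarrow>
     \<not> (card {k \<in> {i - int r .. i + int r}. \<not> \<sigma> k} > card {k \<in> {i - int r .. i + int r}. \<sigma> k})"

definition temp_periodic_pair :: "nat \<Rightarrow> (int \<Rightarrow> bool) \<Rightarrow> (int \<Rightarrow> bool) \<Rightarrow> bool" where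
  "temp_periodic_pair r \<sigma> \<sigma>' \<longleftrightarrow> maj r \<sigma> = \<sigma>' \<and> maj r \<sigma>' = \<sigma>"

text \<open>[i,j] is a block of \<sigma> (an element of B(\<sigma>) = B^0 \<union> B^1); a cyclic interval of Z_n
  is lifted to an integer interval {i..j} with i \<le> j < i + n.\<close>
definition is_block :: "nat \<Rightarrow> (int \<Rightarrow> bool) \<Rightarrow> int \<Rightarrow> int \<Rightarrow> bool" where
  "is_block n \<sigma> i j \<longleftrightarrow> i \<le> j \<and> j < i + int n \<and>
     (\<exists>\<beta>. (\<forall>k \<in> {i..j}. \<sigma> k = \<beta>) \<and> \<sigma> (i - 1) = (\<not> \<beta>) \<and> \<sigma> (j + 1) = (\<not> \<beta>))"

text \<open>Number of switch points (l, l+1) of \<sigma> contained in the (lifted) cell interval [a,b],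
  i.e. with both l and l+1 in [a,b].\<close>
definition switch_count :: "(int \<Rightarrow> bool) \<Rightarrow> int \<Rightarrow> int \<Rightarrow> nat" where
  "switch_count \<sigma> a b = card {l \<in> {a..<b}. \<sigma> l \<noteq> \<sigma> (l + 1)}"

end

theory Submission
  imports Defs
begin

text \<open>A switch of \<open>maj r \<tau>\<close> between \<open>l\<close> and \<open>l + 1\<close> means that the number of ones in the
  window crosses the threshold \<open>r + 1\<close>; sliding the window by one cell drops \<open>l - r\<close> and adds
  \<open>l + r + 1\<close>, so these two cells carry the values of \<open>maj r \<tau>\<close> on either side of the switch.
  For a temporally periodic pair, the two borders of a block \<open>[i, j]\<close> of value \<open>\<beta>\<close> in \<open>\<sigma>'\<close>
  thus make \<open>\<sigma>\<close> equal to \<open>\<not> \<beta>\<close> at \<open>i - r - 1\<close> and to \<open>\<beta>\<close> at \<open>j - r\<close>, while a switch of \<open>\<sigma>\<close>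
  from \<open>\<beta>\<close> back to \<open>\<not> \<beta>\<close> at some \<open>l\<close> in between would make \<open>\<sigma>'\<close> equal to \<open>\<not> \<beta>\<close> at
  \<open>l + r + 1\<close>, inside the block. So \<open>\<sigma>\<close> switches exactly once on \<open>[i - r - 1, j - r]\<close>, and
  symmetrically on \<open>[i + r, j + r + 1]\<close>.\<close>

lemma card_filter_insert:
  assumes "finite A" "x \<notin> A"
  shows "card {k \<in> insert x A. P k} = of_bool (P x) + card {k \<in> A. P k}"
proof -
  have "{k \<in> insert x A. P k} = (if P x then insert x {k \<in> A. P k} else {k \<in> A. P k})"
    by auto
  then show ?thesis using assms by simp
qed

lemma card_window_filter_partition:
  "card {k \<in> {c - int r .. c + int r}. \<not> \<tau> k} + card {k \<in> {c - int r .. c + int r}. \<tau> k}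
     = 2 * r + 1"
proof -
  let ?W = "{c - int r .. c + int r}"
  have "card ?W = card (?W \<inter> {k. \<tau> k}) + card (?W - {k. \<tau> k})"
    by (rule card_Int_Diff) simp
  moreover have "?W \<inter> {k. \<tau> k} = {k \<in> ?W. \<tau> k}" and "?W - {k. \<tau> k} = {k \<in> ?W. \<not> \<tau> k}"
    by auto
  ultimately show ?thesis by simp
qed

lemma maj_iff_card_ge:
  "maj r \<tau> c \<longleftrightarrow> r + 1 \<le> card {k \<in> {c - int r .. c + int r}. \<tau> k}"
  using card_window_filter_partition[of c r \<tau>] unfolding maj_def by linarith

lemma card_window_slide:
  "card {k \<in> {l - int r .. l + int r}. \<tau> k} + of_bool (\<tau> (l + int r + 1))
     = of_bool (\<tau> (l - int r)) + card {k \<in> {l + 1 - int r .. l + 1 + int r}. \<tau> k}"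
proof -
  have "{l - int r .. l + int r + 1} = insert (l + int r + 1) {l - int r .. l + int r}"
    and "{l - int r .. l + int r + 1} = insert (l - int r) {l + 1 - int r .. l + 1 + int r}"
    by auto
  then show ?thesis
    using card_filter_insert[of "{l - int r .. l + int r}" "l + int r + 1" \<tau>]
      card_filter_insert[of "{l + 1 - int r .. l + 1 + int r}" "l - int r" \<tau>]
    by simp
qed

lemma maj_switch_window_ends:
  assumes "maj r \<tau> l \<noteq> maj r \<tau> (l + 1)"
  shows "\<tau> (l - int r) = maj r \<tau> l" and "\<tau> (l + int r + 1) = maj r \<tau> (l + 1)"
proof -
  define A where "A = card {k \<in> {l - int r .. l + int r}. \<tau> k}"
  define B where "B = card {k \<in> {l + 1 - int r .. l + 1 + int r}. \<tau> k}"
  have slide: "A + of_bool (\<tau> (l + int r + 1)) = of_bool (\<tau> (l - int r)) + B"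
    unfolding A_def B_def by (rule card_window_slide)
  have "maj r \<tau> l \<longleftrightarrow> r + 1 \<le> A" and "maj r \<tau> (l + 1) \<longleftrightarrow> r + 1 \<le> B"
    unfolding A_def B_def by (rule maj_iff_card_ge)+
  with assms slide show "\<tau> (l - int r) = maj r \<tau> l" and "\<tau> (l + int r + 1) = maj r \<tau> (l + 1)"
    by (auto simp: of_bool_def split: if_splits)
qed

lemma value_persists:
  fixes \<sigma> :: "int \<Rightarrow> bool"
  assumes persist: "\<forall>l \<in> {a..<b}. \<sigma> l = v \<longrightarrow> \<sigma> (l + 1) = v"
    and "a \<le> x" "\<sigma> x = v" "x \<le> y" "y \<le> b"
  shows "\<sigma> y = v"
  using \<open>x \<le> y\<close> \<open>y \<le> b\<close>
proof (induction y rule: int_ge_induct)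
  case base
  show ?case using \<open>\<sigma> x = v\<close> .
next
  case (step k)
  then have "k \<in> {a..<b}" using \<open>a \<le> x\<close> by simp
  with step persist show ?case by simp
qed

lemma switch_count_eq_1_if_no_switch_back:
  fixes \<sigma> :: "int \<Rightarrow> bool"
  assumes "a \<le> b" "\<sigma> a \<noteq> \<sigma> b"
    and no_back: "\<forall>l \<in> {a..<b}. \<not> (\<sigma> l = \<sigma> b \<and> \<sigma> (l + 1) = \<sigma> a)"
  shows "switch_count \<sigma> a b = 1"
proof -
  have "\<forall>l \<in> {a..<b}. \<sigma> l = \<sigma> b \<longrightarrow> \<sigma> (l + 1) = \<sigma> b"
    using no_back \<open>\<sigma> a \<noteq> \<sigma> b\<close> by auto
  then have stays: "\<sigma> y = \<sigma> b" if "a \<le> x" "\<sigma> x = \<sigma> b" "x \<le> y" "y \<le> b" for x y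
    using value_persists that by blast
  have "\<exists>m \<in> {a..<b}. \<sigma> m \<noteq> \<sigma> (m + 1)"
  proof (rule ccontr)
    assume "\<not> (\<exists>m \<in> {a..<b}. \<sigma> m \<noteq> \<sigma> (m + 1))"
    then have "\<sigma> b = \<sigma> a"
      using value_persists[of a b \<sigma> "\<sigma> a" a b] \<open>a \<le> b\<close> by auto
    with \<open>\<sigma> a \<noteq> \<sigma> b\<close> show False by simp
  qed
  then obtain m where m: "m \<in> {a..<b}" "\<sigma> m \<noteq> \<sigma> (m + 1)" by blast
  have forward: "\<sigma> l = \<sigma> a \<and> \<sigma> (l + 1) = \<sigma> b" if "l \<in> {a..<b}" "\<sigma> l \<noteq> \<sigma> (l + 1)" for l
    using no_back \<open>\<sigma> a \<noteq> \<sigma> b\<close> that by (cases "\<sigma> l"; cases "\<sigma> a"; auto)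
  have "l = m" if "l \<in> {a..<b}" "\<sigma> l \<noteq> \<sigma> (l + 1)" for l
  proof (rule linorder_cases[of l m])
    assume "l < m"
    then show ?thesis using stays[of "l + 1" m] forward[OF that] forward[OF m] m that by auto
  next
    assume "m < l"
    then show ?thesis using stays[of "m + 1" l] forward[OF that] forward[OF m] m that by auto
  qed
  then have "{l \<in> {a..<b}. \<sigma> l \<noteq> \<sigma> (l + 1)} = {m}" using m by blast
  then show ?thesis unfolding switch_count_def by simp
qed

lemma maj_no_switch_off_block_value:
  assumes block: "\<forall>k \<in> {i..j}. \<tau> k = \<beta>"
  shows "\<forall>l \<in> {i - int r - 1..<j - int r}. \<not> (maj r \<tau> l = \<beta> \<and> maj r \<tau> (l + 1) = (\<not> \<beta>))"
proof (intro ballI notI)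
  fix l assume l: "l \<in> {i - int r - 1..<j - int r}"
    and "maj r \<tau> l = \<beta> \<and> maj r \<tau> (l + 1) = (\<not> \<beta>)"
  then have "\<tau> (l + int r + 1) = (\<not> \<beta>)" using maj_switch_window_ends(2)[of r \<tau> l] by auto
  moreover have "l + int r + 1 \<in> {i..j}" using l by simp
  ultimately show False using block by auto
qed

lemma maj_no_switch_onto_block_value:
  assumes block: "\<forall>k \<in> {i..j}. \<tau> k = \<beta>"
  shows "\<forall>l \<in> {i + int r..<j + int r + 1}. \<not> (maj r \<tau> l = (\<not> \<beta>) \<and> maj r \<tau> (l + 1) = \<beta>)"
proof (intro ballI notI)
  fix l assume l: "l \<in> {i + int r..<j + int r + 1}"
    and "maj r \<tau> l = (\<not> \<beta>) \<and> maj r \<tau> (l + 1) = \<beta>"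
  then have "\<tau> (l - int r) = (\<not> \<beta>)" using maj_switch_window_ends(1)[of r \<tau> l] by auto
  moreover have "l - int r \<in> {i..j}" using l by simp
  ultimately show False using block by auto
qed

theorem claim7:
  fixes r n :: nat and \<sigma> \<sigma>' :: "int \<Rightarrow> bool" and i j :: int
  assumes "r \<ge> 1" and "n \<ge> 1"
    and "periodic_cfg n \<sigma>" and "periodic_cfg n \<sigma>'"
    and "temp_periodic_pair r \<sigma> \<sigma>'"
    and "is_block n \<sigma>' i j"
  shows "switch_count \<sigma> (i - int r - 1) (j - int r) = 1
       \<and> switch_count \<sigma> (i + int r) (j + int r + 1) = 1"
proof -
  have \<sigma>': "\<sigma>' = maj r \<sigma>" and \<sigma>: "\<sigma> = maj r \<sigma>'"
    using \<open>temp_periodic_pair r \<sigma> \<sigma>'\<close> unfolding temp_periodic_pair_def by auto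
  obtain \<beta> where "i \<le> j" and block: "\<forall>k \<in> {i..j}. \<sigma>' k = \<beta>"
    and "\<sigma>' (i - 1) = (\<not> \<beta>)" and "\<sigma>' (j + 1) = (\<not> \<beta>)"
    using \<open>is_block n \<sigma>' i j\<close> unfolding is_block_def by auto
  then have "maj r \<sigma> (i - 1) \<noteq> maj r \<sigma> (i - 1 + 1)" and "maj r \<sigma> j \<noteq> maj r \<sigma> (j + 1)"
    by (auto simp: \<sigma>'[symmetric])
  from maj_switch_window_ends[OF this(1)] maj_switch_window_ends[OF this(2)]
  have ends: "\<sigma> (i - int r - 1) = (\<not> \<beta>)" "\<sigma> (j - int r) = \<beta>"
    "\<sigma> (i + int r) = \<beta>" "\<sigma> (j + int r + 1) = (\<not> \<beta>)"
    using \<open>i \<le> j\<close> block \<open>\<sigma>' (i - 1) = (\<not> \<beta>)\<close> \<open>\<sigma>' (j + 1) = (\<not> \<beta>)\<close>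
    by (simp_all add: \<sigma>'[symmetric] diff_diff_eq add.commute)
  have "\<forall>l \<in> {i - int r - 1..<j - int r}. \<not> (\<sigma> l = \<beta> \<and> \<sigma> (l + 1) = (\<not> \<beta>))"
    using maj_no_switch_off_block_value[OF block, of r] by (simp only: \<sigma>)
  then have left: "switch_count \<sigma> (i - int r - 1) (j - int r) = 1"
    using \<open>i \<le> j\<close> ends by (intro switch_count_eq_1_if_no_switch_back) simp_all
  have "\<forall>l \<in> {i + int r..<j + int r + 1}. \<not> (\<sigma> l = (\<not> \<beta>) \<and> \<sigma> (l + 1) = \<beta>)"
    using maj_no_switch_onto_block_value[OF block, of r] by (simp only: \<sigma>)
  then have right: "switch_count \<sigma> (i + int r) (j + int r + 1) = 1"
    using \<open>i \<le> j\<close> ends by (intro switch_count_eq_1_if_no_switch_back) simp_all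
  from left right show ?thesis ..
qed

end
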